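(* Consider the non-stationary $N$-armed stochastic bandit problem (described in the context) in an abruptly-changing environment in which the number of breakpoints up to time $T$ satisfies $\Upsilon_T \le C\,T^{\nu}$ for some constant $C>0$ and some known $\nu\in[0,1)$, and assume $\Delta_{\min}>0$. Run the LM-DSEE algorithm with $a=b=1$, exponent $\rho=\frac{1-\nu}{1+\nu}$, exploration constant $\gamma\ge \frac{2}{\Delta_{\min}^2}$ (so that $L(k)=\lceil \gamma\ln(k^\rho l)\rceil$), and $l>0$ chosen so that $\lceil k^\rho l\rceil - N L(k)\ge 0$ for all $k\ge 1$. Then the expected cumulative regret satisfies \[ R^{\text{LM-DSEE}}(T)\in O\big(T^{\frac{1+\nu}{2}}\ln T\big)\quad\text{as } T\to\infty . \]
   Context: Non-stationary stochastic MAB: there are $N$ arms. At each time $t\in\{1,\dots,T\}$ the decision-maker picks an arm $j_t$ and receives a reward $r_t$ drawn (independently of the past, given the chosen arm and time) from a distribution supported on $[0,1]$ with mean $\mu_{j_t}(t)\in[0,1]$; the means $\mu_j(t)$ are unknown and may depend on $t$. Let $\mu_{j_t^*}(t)=\max_{j}\mu_j(t)$. The expected cumulative regret of a policy is $R(T)=\sum_{t=1}^T \mathbb{E}[\mu_{j_t^*}(t)-\mu_{j_t}(t)]$, the expectation being over the randomness of the chosen arms. Abruptly-changing environment: the mean vector $(\mu_1(t),\dots,\mu_N(t))$ is piecewise constant in $t$; a time at which it changes is a breakpoint, and $\Upsilon_T$ denotes the number of breakpoints up to time $T$. Define $\Delta_{\min}=\min\{\mu_{j_t^*}(t)-\mu_j(t)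 : t\in\{1,\dots,T\},\ j\ne j_t^*\}$ (assumed positive and known to the algorithm). LM-DSEE algorithm (parameters $a>0$, $b\in(0,1]$, $\rho>0$, $\gamma>0$, $l>0$): time is divided into consecutive epochs $k=1,2,\dots$ until time $T$ is reached. Epoch $k$ consists of (i) an exploration phase: for each arm $j=1,\dots,N$, arm $j$ is played $L(k)=\lceil \gamma\ln(k^\rho l b)\rceil$ times consecutively, and $\bar r^{\,\text{epch}}_j(k)$ is the sample mean of the $L(k)$ rewards of arm $j$ collected in this exploration phase only; followed by (ii) an exploitation phase: the arm $j^{\text{epch}}_k\in\arg\max_j \bar r^{\,\text{epch}}_j(k)$ is played $\lceil a k^\rho l\rceil - N L(k)$ times. Thus epoch $k$ has length $\lceil a k^\rho l\rceil$. The hidden constant in the $O(\cdot)$ may depend on $N,\nu,C,\Delta_{\min},\gamma,l$ but not on $T$. *)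

theory Defs
  imports "HOL-Probability.Probability" "HOL-Library.Landau_Symbols"
begin

text \<open>LM-DSEE with a = b = 1. Arms are indexed 0..N-1, time steps start at 1.
  Epoch k (k \<ge> 1) has length ceil(k^rho * l); in its exploration phase every arm
  is played L(k) = ceil(gamma * ln(k^rho * l)) times (negative values read as 0).\<close>

definition epoch_len :: "real \<Rightarrow> real \<Rightarrow> nat \<Rightarrow> nat" where
  "epoch_len \<rho> l k = nat \<lceil>real k powr \<rho> * l\<rceil>"

definition expl_len :: "real \<Rightarrow> real \<Rightarrow> real \<Rightarrow> nat \<Rightarrow> nat" where
  "expl_len \<gamma> \<rho> l k = nat \<lceil>\<gamma> * ln (real k powr \<rho> * l)\<rceil>"

definition epoch_start :: "real \<Rightarrow> real \<Rightarrow> nat \<Rightarrow> nat" where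
  "epoch_start \<rho> l k = (\<Sum>i\<in>{1..<k}. epoch_len \<rho> l i)"

definition epoch_of :: "real \<Rightarrow> real \<Rightarrow> nat \<Rightarrow> nat" where
  "epoch_of \<rho> l t = (LEAST k. 1 \<le> k \<and> t \<le> epoch_start \<rho> l (Suc k))"

text \<open>Arm played at time t, given the reward table r (r j s = reward arm j would
  give at time s). sel is the arg-max (tie breaking) rule for the exploitation arm.\<close>
definition lmdsee_arm ::
  "nat \<Rightarrow> ((nat \<Rightarrow> real) \<Rightarrow> nat) \<Rightarrow> real \<Rightarrow> real \<Rightarrow> real \<Rightarrow> (nat \<Rightarrow> nat \<Rightarrow> real) \<Rightarrow> nat \<Rightarrow> nat" where
  "lmdsee_arm N sel \<gamma> \<rho> l r t =
    (let k = epoch_of \<rho> l t; s = epoch_start \<rho> l k; L = expl_len \<gamma> \<rho> l k; p = t - s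
     in if p \<le> N * L then (p - 1) div L
        else sel (\<lambda>j. (\<Sum>i\<in>{1..L}. r j (s + j * L + i)) / real L))"

definition breakpoints :: "nat \<Rightarrow> (nat \<Rightarrow> nat \<Rightarrow> real) \<Rightarrow> nat \<Rightarrow> nat" where
  "breakpoints N \<mu> T = card {t\<in>{2..T}. \<exists>j<N. \<mu> j t \<noteq> \<mu> j (t - 1)}"

definition lmdsee_regret ::
  "'a measure \<Rightarrow> (nat \<Rightarrow> nat \<Rightarrow> 'a \<Rightarrow> real) \<Rightarrow> (nat \<Rightarrow> nat \<Rightarrow> real) \<Rightarrow> nat \<Rightarrow>
   ((nat \<Rightarrow> real) \<Rightarrow> nat) \<Rightarrow> real \<Rightarrow> real \<Rightarrow> real \<Rightarrow> nat \<Rightarrow> real" where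
  "lmdsee_regret M X \<mu> N sel \<gamma> \<rho> l T =
    (\<Sum>t\<in>{1..T}. integral\<^sup>L M (\<lambda>\<omega>.
        Max ((\<lambda>j. \<mu> j t) ` {..<N}) - \<mu> (lmdsee_arm N sel \<gamma> \<rho> l (\<lambda>j s. X j s \<omega>) t) t))"

end

theory Submission
  imports Defs
begin

text \<open>
  Split time into the epochs of the algorithm. Exploration in epoch \<open>k\<close> costs
  \<open>N L(k) = O(ln T)\<close>. If the means do not change during epoch \<open>k\<close>, Hoeffding's
  inequality and \<open>\<gamma> \<ge> 2 / \<Delta>\<^sup>2\<close> bound the probability that some sample mean is off by
  \<open>\<Delta> / 2\<close> by \<open>2N / (k\<^sup>\<rho> l)\<close>, and outside that event the exploited arm is optimal;
  so exploitation over the whole epoch costs \<open>O(N)\<close> in expectation. An epoch in which the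
  means change contains a breakpoint, so all such epochs together cost at most \<open>\<Upsilon>\<close> times
  the longest epoch length. With \<open>\<rho> = (1 - \<nu>) / (1 + \<nu>)\<close> there are
  \<open>O(T\<^bsup>(1+\<nu>)/2\<^esup>)\<close> epochs up to time \<open>T\<close>, each of length \<open>O(T\<^bsup>(1-\<nu>)/2\<^esup>)\<close>,
  and \<open>\<Upsilon> = O(T\<^sup>\<nu>)\<close>, which gives \<open>O(T\<^bsup>(1+\<nu>)/2\<^esup> ln T)\<close>.
\<close>

lemma (in prob_space) integral_le_prob_of_zero_outside:
  fixes g :: "'a \<Rightarrow> real"
  assumes "\<And>\<omega>. 0 \<le> g \<omega> \<and> g \<omega> \<le> 1"
    and "\<And>\<omega>. \<omega> \<in> space M \<Longrightarrow> \<omega> \<notin> B \<Longrightarrow> g \<omega> = 0" and "B \<in> events"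
  shows "integral\<^sup>L M g \<le> prob B"
proof (cases "integrable M g")
  case True
  have "integral\<^sup>L M g \<le> integral\<^sup>L M (indicator B :: 'a \<Rightarrow> real)"
    by (rule integral_mono) (use True assms in \<open>auto simp: indicator_def emeasure_eq_measure\<close>)
  then show ?thesis using assms(3) by simp
qed (simp add: not_integrable_integral_eq)

lemma sum_powr_ge:
  fixes \<rho> :: real
  assumes "\<rho> \<le> 1"
  shows "real m powr (1 + \<rho>) / 2 \<le> (\<Sum>i\<in>{1..m}. real i powr \<rho>)"
proof (cases "m = 0")
  case False
  then have m0: "0 < real m" by simp
  have "real m powr (1 + \<rho>) / 2 \<le> real m powr (\<rho> - 1) * (real m * (real m + 1) / 2)"
  proof -
    have "real m * real m powr (\<rho> - 1) = real m powr \<rho>"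
      "real m * real m powr \<rho> = real m powr (1 + \<rho>)"
      using powr_mult_base[of "real m"] m0 by auto
    then have "real m powr (1 + \<rho>) = real m powr (\<rho> - 1) * (real m * real m)"
      by (metis mult.commute mult.left_commute)
    then show ?thesis using m0 by (simp add: divide_right_mono mult_left_mono)
  qed
  also have "\<dots> = (\<Sum>i\<in>{1..m}. real i * real m powr (\<rho> - 1))"
    using double_gauss_sum_from_Suc_0[of m, where 'a=real]
    by (simp add: sum_distrib_right[symmetric] mult.commute)
  also have "\<dots> \<le> (\<Sum>i\<in>{1..m}. real i powr \<rho>)"
  proof (rule sum_mono)
    fix i assume i: "i \<in> {1..m}"
    have "real i * real m powr (\<rho> - 1) \<le> real i * real i powr (\<rho> - 1)"
      using assms i by (intro mult_left_mono powr_mono2') auto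
    also have "\<dots> = real i powr \<rho>"
      using i by (simp add: powr_mult_base)
    finally show "real i * real m powr (\<rho> - 1) \<le> real i powr \<rho>" .
  qed
  finally show ?thesis .
qed simp

lemma (in prob_space) prob_sample_mean_deviation_le:
  fixes Y :: "'i \<Rightarrow> 'a \<Rightarrow> real"
  assumes "finite I" "I \<noteq> {}" "indep_vars (\<lambda>_. borel) Y I"
    and "\<And>i. i \<in> I \<Longrightarrow> AE \<omega> in M. Y i \<omega> \<in> {0..1}"
    and "\<And>i. i \<in> I \<Longrightarrow> expectation (Y i) = m" and "0 \<le> \<epsilon>"
  shows "prob {\<omega>\<in>space M. \<epsilon> \<le> \<bar>(\<Sum>i\<in>I. Y i \<omega>) / real (card I) - m\<bar>}
           \<le> 2 * exp (- 2 * real (card I) * \<epsilon>\<^sup>2)"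
proof -
  define n where "n = real (card I)"
  have n_pos: "0 < n" using assms(1,2) by (simp add: n_def card_gt_0_iff)
  interpret Hoeffding_ineq M I Y "\<lambda>_. 0" "\<lambda>_. 1" "n * m"
    by unfold_locales (use assms in \<open>simp_all add: n_def\<close>)
  have "{\<omega>\<in>space M. \<epsilon> \<le> \<bar>(\<Sum>i\<in>I. Y i \<omega>) / n - m\<bar>}
          = {\<omega>\<in>space M. n * \<epsilon> \<le> \<bar>(\<Sum>i\<in>I. Y i \<omega>) - n * m\<bar>}"
  proof -
    have "\<bar>(\<Sum>i\<in>I. Y i \<omega>) - n * m\<bar> = n * \<bar>(\<Sum>i\<in>I. Y i \<omega>) / n - m\<bar>" for \<omega>
      using n_pos by (simp add: abs_mult[symmetric] field_simps)
    then show ?thesis using n_pos by (simp add: mult_le_cancel_left_pos)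
  qed
  also have "prob \<dots> \<le> 2 * exp (- 2 * (n * \<epsilon>)\<^sup>2 / (\<Sum>i\<in>I. ((1::real) - 0)\<^sup>2))"
    by (rule Hoeffding_ineq_abs_ge) (use assms n_pos in \<open>simp_all add: n_def\<close>)
  also have "\<dots> = 2 * exp (- 2 * n * \<epsilon>\<^sup>2)"
    using n_pos by (simp add: n_def power2_eq_square)
  finally show ?thesis by (simp add: n_def)
qed

section \<open>Epochs\<close>

lemma epoch_start_1: "epoch_start \<rho> l 1 = 0"
  unfolding epoch_start_def by simp

lemma epoch_start_Suc:
  "1 \<le> k \<Longrightarrow> epoch_start \<rho> l (Suc k) = epoch_start \<rho> l k + epoch_len \<rho> l k"
  unfolding epoch_start_def by (simp add: atLeastLessThanSuc)

lemma epoch_start_mono: "k \<le> k' \<Longrightarrow> epoch_start \<rho> l k \<le> epoch_start \<rho> l k'"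
  unfolding epoch_start_def by (intro sum_mono2) auto

locale epoch_schedule =
  fixes \<rho> l :: real
  assumes l_pos: "0 < l"
begin

lemma epoch_len_ge: "real k powr \<rho> * l \<le> real (epoch_len \<rho> l k)"
  using l_pos unfolding epoch_len_def by (simp add: ceiling_correct)

lemma epoch_len_less: "real (epoch_len \<rho> l k) < real k powr \<rho> * l + 1"
proof -
  have "0 \<le> real k powr \<rho> * l" using l_pos by simp
  then show ?thesis unfolding epoch_len_def by linarith
qed

lemma epoch_len_pos: "1 \<le> k \<Longrightarrow> 1 \<le> epoch_len \<rho> l k"
  using l_pos unfolding epoch_len_def by (simp add: Suc_le_eq)

lemma epoch_len_mono:
  assumes "0 \<le> \<rho>" "k \<le> k'"
  shows "epoch_len \<rho> l k \<le> epoch_len \<rho> l k'"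
proof -
  have "real k powr \<rho> * l \<le> real k' powr \<rho> * l"
    using assms l_pos by (intro mult_right_mono powr_mono2) auto
  then show ?thesis unfolding epoch_len_def by (intro nat_mono ceiling_mono)
qed

lemma epoch_start_ge: "1 \<le> k \<Longrightarrow> k - 1 \<le> epoch_start \<rho> l k"
proof (induction k rule: dec_induct)
  case (step n)
  then show ?case using epoch_start_Suc[of n] epoch_len_pos[of n] by simp
qed (simp add: epoch_start_1)

lemma epoch_of_bounds:
  assumes "1 \<le> t"
  shows "1 \<le> epoch_of \<rho> l t" "epoch_start \<rho> l (epoch_of \<rho> l t) < t"
    "t \<le> epoch_start \<rho> l (Suc (epoch_of \<rho> l t))"
proof -
  let ?P = "\<lambda>k. 1 \<le> k \<and> t \<le> epoch_start \<rho> l (Suc k)"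
  define k where "k = epoch_of \<rho> l t"
  have Pk: "?P k"
    unfolding k_def epoch_of_def
    by (rule LeastI[of ?P t]) (use epoch_start_ge[of "Suc t"] assms in simp)
  have "epoch_start \<rho> l k < t"
  proof (cases "k = 1")
    case True
    then show ?thesis using assms epoch_start_1 by simp
  next
    case False
    then have "\<not> ?P (k - 1)"
      using Pk not_less_Least[of "k - 1" ?P] unfolding k_def epoch_of_def by auto
    then show ?thesis using False Pk by (cases k) auto
  qed
  with Pk show "1 \<le> epoch_of \<rho> l t" "epoch_start \<rho> l (epoch_of \<rho> l t) < t"
    "t \<le> epoch_start \<rho> l (Suc (epoch_of \<rho> l t))"
    unfolding k_def by auto
qed

lemma epoch_of_eqI:
  assumes "1 \<le> k" "epoch_start \<rho> l k < t" "t \<le> epoch_start \<rho> l (Suc k)"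
  shows "epoch_of \<rho> l t = k"
  unfolding epoch_of_def
proof (rule Least_equality)
  fix k' assume "1 \<le> k' \<and> t \<le> epoch_start \<rho> l (Suc k')"
  then show "k \<le> k'"
    using epoch_start_mono[of "Suc k'" k \<rho> l] assms by (cases "k \<le> k'") auto
qed (use assms in auto)

lemma epoch_of_mono:
  assumes "1 \<le> t" "t \<le> T"
  shows "epoch_of \<rho> l t \<le> epoch_of \<rho> l T"
  unfolding epoch_of_def[of \<rho> l t]
  by (rule Least_le) (use epoch_of_bounds[of T] assms in \<open>auto simp: epoch_of_def\<close>)

lemma epoch_of_le: "1 \<le> T \<Longrightarrow> epoch_of \<rho> l T \<le> T"
  using epoch_start_ge[of "epoch_of \<rho> l T"] epoch_of_bounds[of T] by linarith

lemma sum_le_sum_over_epochs: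
  fixes f :: "nat \<Rightarrow> real"
  assumes T: "1 \<le> T" and f: "\<And>t. 0 \<le> f t"
  shows "(\<Sum>t\<in>{1..T}. f t)
           \<le> (\<Sum>k\<in>{1..epoch_of \<rho> l T}. \<Sum>t\<in>{epoch_start \<rho> l k + 1..epoch_start \<rho> l (Suc k)}. f t)"
proof -
  define K where "K = epoch_of \<rho> l T"
  define B where "B k = {epoch_start \<rho> l k + 1..epoch_start \<rho> l (Suc k)}" for k
  have "{1..T} \<subseteq> (\<Union>k\<in>{1..K}. B k)"
  proof
    fix t assume t: "t \<in> {1..T}"
    then have "epoch_of \<rho> l t \<in> {1..K}" "t \<in> B (epoch_of \<rho> l t)"
      using epoch_of_bounds[of t] epoch_of_mono[of t T] by (auto simp: K_def B_def)
    then show "t \<in> (\<Union>k\<in>{1..K}. B k)" by blast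
  qed
  then have "(\<Sum>t\<in>{1..T}. f t) \<le> (\<Sum>t\<in>(\<Union>k\<in>{1..K}. B k). f t)"
    by (rule sum_mono2[rotated]) (auto simp: B_def f)
  also have "\<dots> = (\<Sum>k\<in>{1..K}. \<Sum>t\<in>B k. f t)"
  proof (rule sum.UNION_disjoint)
    show "\<forall>k\<in>{1..K}. \<forall>k'\<in>{1..K}. k \<noteq> k' \<longrightarrow> B k \<inter> B k' = {}"
    proof (intro ballI impI)
      fix k k' assume k: "k \<in> {1..K}" and k': "k' \<in> {1..K}" and "k \<noteq> k'"
      have "epoch_of \<rho> l t = k" "epoch_of \<rho> l t = k'" if "t \<in> B k" "t \<in> B k'" for t
        using that k k' epoch_of_eqI[of k t] epoch_of_eqI[of k' t] unfolding B_def by auto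
      then show "B k \<inter> B k' = {}" using \<open>k \<noteq> k'\<close> by blast
    qed
  qed (auto simp: B_def)
  finally show ?thesis unfolding K_def B_def .
qed

lemma epoch_start_ge_powr:
  assumes "\<rho> \<le> 1"
  shows "l * real (k - 1) powr (1 + \<rho>) / 2 \<le> real (epoch_start \<rho> l k)"
proof -
  have "l * real (k - 1) powr (1 + \<rho>) / 2 \<le> l * (\<Sum>i\<in>{1..k - 1}. real i powr \<rho>)"
    using sum_powr_ge[OF assms, of "k - 1"] l_pos by simp
  also have "\<dots> = (\<Sum>i\<in>{1..k - 1}. real i powr \<rho> * l)"
    by (simp add: sum_distrib_left mult.commute)
  also have "\<dots> \<le> (\<Sum>i\<in>{1..k - 1}. real (epoch_len \<rho> l i))"
    by (intro sum_mono epoch_len_ge)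
  also have "{1..k - 1} = {1..<k}" by auto
  finally show ?thesis by (simp add: epoch_start_def)
qed

lemma epoch_of_le_powr:
  assumes "0 \<le> \<rho>" "\<rho> \<le> 1" "1 \<le> T"
  shows "real (epoch_of \<rho> l T) \<le> (2 / l * real T) powr (1 / (1 + \<rho>)) + 1"
proof -
  define K where "K = epoch_of \<rho> l T"
  have "l * real (K - 1) powr (1 + \<rho>) / 2 < real T"
    using epoch_start_ge_powr[OF assms(2), of K] epoch_of_bounds[OF assms(3)]
    unfolding K_def by linarith
  then have "real (K - 1) powr (1 + \<rho>) \<le> 2 / l * real T"
    using l_pos by (simp add: field_simps)
  then have "(real (K - 1) powr (1 + \<rho>)) powr (1 / (1 + \<rho>)) \<le> (2 / l * real T) powr (1 / (1 + \<rho>))"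
    using assms by (intro powr_mono2) auto
  then have "real (K - 1) \<le> (2 / l * real T) powr (1 / (1 + \<rho>))"
    using assms by (simp add: powr_powr)
  then show ?thesis unfolding K_def by linarith
qed

end

lemma expl_len_le_ln:
  assumes "0 \<le> \<gamma>" "0 \<le> \<rho>" "\<rho> \<le> 1" "0 < l" "1 \<le> k" "k \<le> T" "3 \<le> T"
  shows "real (expl_len \<gamma> \<rho> l k) \<le> (\<gamma> * (1 + \<bar>ln l\<bar>) + 1) * ln (real T)"
proof -
  have lnT: "1 \<le> ln (real T)"
    using assms(7) exp_le by (subst ln_ge_iff) auto
  have "ln (real k powr \<rho> * l) = \<rho> * ln (real k) + ln l"
    using assms by (simp add: ln_mult)
  also have "\<dots> \<le> ln (real T) + \<bar>ln l\<bar> * ln (real T)"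
  proof -
    have "\<rho> * ln (real k) \<le> ln (real k)" "ln (real k) \<le> ln (real T)" "ln l \<le> \<bar>ln l\<bar> * ln (real T)"
      using assms lnT mult_left_mono[OF lnT, of "\<bar>ln l\<bar>"] by (auto intro: mult_left_le_one_le)
    then show ?thesis by linarith
  qed
  finally have "\<gamma> * ln (real k powr \<rho> * l) \<le> \<gamma> * ((1 + \<bar>ln l\<bar>) * ln (real T))"
    using assms(1) by (intro mult_left_mono) (auto simp: algebra_simps)
  moreover have "0 \<le> \<gamma> * ((1 + \<bar>ln l\<bar>) * ln (real T))"
    using assms(1) lnT by simp
  ultimately show ?thesis
    using lnT unfolding expl_len_def by (simp add: algebra_simps) linarith
qed

section \<open>The regret of LM-DSEE, epoch by epoch\<close>

locale lmdsee = prob_space M + epoch_schedule \<rho> l for M :: "'a measure" and \<rho> l :: real +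
  fixes X :: "nat \<Rightarrow> nat \<Rightarrow> 'a \<Rightarrow> real" and \<mu> :: "nat \<Rightarrow> nat \<Rightarrow> real"
    and N :: nat and sel :: "(nat \<Rightarrow> real) \<Rightarrow> nat" and \<Delta> \<gamma> :: real
  assumes N_pos: "1 \<le> N"
    and indep: "indep_vars (\<lambda>_. borel) (\<lambda>(j, t). X j t) ({..<N} \<times> UNIV)"
    and support: "\<And>j t. j < N \<Longrightarrow> AE \<omega> in M. 0 \<le> X j t \<omega> \<and> X j t \<omega> \<le> 1"
    and mean: "\<And>j t. j < N \<Longrightarrow> expectation (X j t) = \<mu> j t"
    and gap_pos: "0 < \<Delta>"
    and gap: "\<And>t. \<exists>i<N. \<forall>j<N. j \<noteq> i \<longrightarrow> \<mu> j t + \<Delta> \<le> \<mu> i t"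
    and \<gamma>_ge: "2 / \<Delta>\<^sup>2 \<le> \<gamma>"
    and \<rho>_nonneg: "0 \<le> \<rho>"
    and len_ok: "\<And>k::nat. 1 \<le> k \<Longrightarrow>
       0 \<le> \<lceil>real k powr \<rho> * l\<rceil> - int N * \<lceil>\<gamma> * ln (real k powr \<rho> * l)\<rceil>"
    and sel: "\<And>v. sel v < N \<and> (\<forall>j<N. v j \<le> v (sel v))"
begin

abbreviation "S \<equiv> epoch_start \<rho> l"
abbreviation "len \<equiv> epoch_len \<rho> l"
abbreviation "L \<equiv> expl_len \<gamma> \<rho> l"
abbreviation "arm \<omega> \<equiv> lmdsee_arm N sel \<gamma> \<rho> l (\<lambda>j s. X j s \<omega>)"

definition inst_regret :: "nat \<Rightarrow> 'a \<Rightarrow> real" where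
  "inst_regret t \<omega> = Max ((\<lambda>j. \<mu> j t) ` {..<N}) - \<mu> (arm \<omega> t) t"

definition expl_mean :: "nat \<Rightarrow> nat \<Rightarrow> 'a \<Rightarrow> real" where
  "expl_mean k j \<omega> = (\<Sum>i\<in>{1..L k}. X j (S k + j * L k + i) \<omega>) / real (L k)"

definition stationary_epoch :: "nat \<Rightarrow> bool" where
  "stationary_epoch k \<longleftrightarrow> (\<forall>t\<in>{S k + 1..S (Suc k)}. \<forall>j<N. \<mu> j t = \<mu> j (S k + 1))"

definition misestimate :: "nat \<Rightarrow> nat \<Rightarrow> 'a set" where
  "misestimate k j = {\<omega>\<in>space M. \<Delta> / 2 \<le> \<bar>expl_mean k j \<omega> - \<mu> j (S k + 1)\<bar>}"

lemma \<gamma>_pos: "0 < \<gamma>"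
proof -
  have "0 < 2 / \<Delta>\<^sup>2" using gap_pos by simp
  then show ?thesis using \<gamma>_ge by linarith
qed

lemma X_measurable [measurable]: "j < N \<Longrightarrow> X j t \<in> borel_measurable M"
  using indep unfolding indep_vars_def2 by auto

lemma mean_bounds: "j < N \<Longrightarrow> 0 \<le> \<mu> j t \<and> \<mu> j t \<le> 1"
proof -
  assume j: "j < N"
  have "integrable M (X j t)"
    by (rule integrable_const_bound[where B=1])
      (use support[OF j, of t] j in \<open>auto elim: eventually_mono\<close>)
  then have "expectation (X j t) \<le> expectation (\<lambda>_. 1)"
    using support[OF j] by (intro integral_mono_AE) (auto elim: eventually_mono)
  moreover have "0 \<le> expectation (X j t)"
    using support[OF j] by (intro integral_nonneg_AE) (auto elim: eventually_mono)
  ultimately show ?thesis using mean[OF j] by (simp add: prob_space)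
qed

lemma arm_less: "arm \<omega> t < N"
proof -
  define k where "k = epoch_of \<rho> l t"
  define p where "p = t - S k"
  show ?thesis
  proof (cases "p \<le> N * L k")
    case True
    then have "arm \<omega> t = (p - 1) div L k"
      unfolding lmdsee_arm_def Let_def k_def p_def by simp
    also have "\<dots> < N"
    proof (cases "L k = 0")
      case False
      then have "p - 1 < N * L k" using True N_pos by (cases p) auto
      then show ?thesis using False by (simp add: div_less_iff_less_mult mult.commute)
    qed (use N_pos in simp)
    finally show ?thesis .
  next
    case False
    then have "arm \<omega> t = sel (\<lambda>j. expl_mean k j \<omega>)"
      unfolding lmdsee_arm_def Let_def k_def p_def expl_mean_def by simp
    then show ?thesis using sel by simp
  qed
qed

lemma inst_regret_bounds: "0 \<le> inst_regret t \<omega> \<and> inst_regret t \<omega> \<le> 1"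
proof -
  have fin: "finite ((\<lambda>j. \<mu> j t) ` {..<N})" and ne: "(\<lambda>j. \<mu> j t) ` {..<N} \<noteq> {}"
    using N_pos by (auto simp: lessThan_empty_iff)
  have "\<mu> (arm \<omega> t) t \<le> Max ((\<lambda>j. \<mu> j t) ` {..<N})"
    using arm_less fin by (intro Max_ge) auto
  moreover have "Max ((\<lambda>j. \<mu> j t) ` {..<N}) \<le> 1"
    using fin ne mean_bounds by (subst Max_le_iff) auto
  moreover have "0 \<le> \<mu> (arm \<omega> t) t"
    using mean_bounds arm_less by blast
  ultimately show ?thesis unfolding inst_regret_def by simp
qed

lemma expected_inst_regret_le_1: "expectation (inst_regret t) \<le> 1"
  using integral_le_prob_of_zero_outside[of "inst_regret t" "space M"] inst_regret_bounds
  by (simp add: prob_space)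

lemma expected_inst_regret_nonneg: "0 \<le> expectation (inst_regret t)"
  using inst_regret_bounds by (intro integral_nonneg_AE) auto

lemma regret_eq_sum: "lmdsee_regret M X \<mu> N sel \<gamma> \<rho> l T = (\<Sum>t\<in>{1..T}. expectation (inst_regret t))"
  unfolding lmdsee_regret_def inst_regret_def by simp

lemma regret_nonneg: "0 \<le> lmdsee_regret M X \<mu> N sel \<gamma> \<rho> l T"
  unfolding regret_eq_sum by (intro sum_nonneg expected_inst_regret_nonneg)

lemma exploration_le_epoch_len: "1 \<le> k \<Longrightarrow> N * L k \<le> len k"
proof -
  assume k: "1 \<le> k"
  define x where "x = real k powr \<rho> * l"
  define y where "y = \<gamma> * ln x"
  have ok: "int N * \<lceil>y\<rceil> \<le> \<lceil>x\<rceil>" using len_ok[OF k] by (simp add: x_def y_def)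
  have "int (N * L k) \<le> int (len k)"
  proof (cases "\<lceil>y\<rceil> \<le> 0")
    case False
    have "0 < x" using k l_pos by (simp add: x_def)
    then have "int (len k) = \<lceil>x\<rceil>" by (simp add: epoch_len_def x_def)
    moreover have "int (L k) = \<lceil>y\<rceil>" using False by (simp add: expl_len_def y_def x_def)
    ultimately show ?thesis using ok by simp
  qed (simp add: expl_len_def y_def x_def)
  then show ?thesis by linarith
qed

lemma misestimate_event: "misestimate k j \<in> events" if "j < N"
proof -
  have "expl_mean k j \<in> borel_measurable M"
    using that unfolding expl_mean_def by measurable
  then show ?thesis unfolding misestimate_def by measurable
qed

lemma exploration_block_subset_epoch:
  assumes "1 \<le> k" "j < N"
  shows "{S k + j * L k + 1..S k + j * L k + L k} \<subseteq> {S k + 1..S (Suc k)}"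
proof -
  have "j * L k + L k \<le> N * L k"
    using assms(2) by (metis add.commute mult_Suc mult_le_mono1 Suc_leI)
  then show ?thesis
    using exploration_le_epoch_len[OF assms(1)] epoch_start_Suc[OF assms(1)] by auto
qed

lemma prob_misestimate_le:
  assumes k: "1 \<le> k" and stat: "stationary_epoch k" and j: "j < N" and L_pos: "1 \<le> L k"
  shows "prob (misestimate k j) \<le> 2 * exp (- real (L k) * \<Delta>\<^sup>2 / 2)"
proof -
  define a where "a = S k + j * L k"
  define I where "I = Pair j ` {a + 1..a + L k}"
  have inj: "inj_on (Pair j) A" for A :: "nat set" by (simp add: inj_on_def)
  have card_I: "card I = L k" unfolding I_def by (simp add: card_image[OF inj])
  have "expl_mean k j \<omega> = (\<Sum>(j, t)\<in>I. X j t \<omega>) / real (card I)" for \<omega>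
    using sum.shift_bounds_cl_nat_ivl[of "\<lambda>t. X j t \<omega>" 1 a "L k"]
    unfolding expl_mean_def card_I unfolding I_def sum.reindex[OF inj] a_def by (simp add: add.commute)
  then have "misestimate k j
      = {\<omega>\<in>space M. \<Delta> / 2 \<le> \<bar>(\<Sum>i\<in>I. (\<lambda>(j, t). X j t) i \<omega>) / real (card I) - \<mu> j (S k + 1)\<bar>}"
    unfolding misestimate_def by (simp add: case_prod_unfold)
  also have "prob \<dots> \<le> 2 * exp (- 2 * real (card I) * (\<Delta> / 2)\<^sup>2)"
  proof (rule prob_sample_mean_deviation_le)
    show "indep_vars (\<lambda>_. borel) (\<lambda>(j, t). X j t) I"
      by (rule indep_vars_subset[OF indep]) (use j in \<open>auto simp: I_def\<close>)
    show "AE \<omega> in M. (\<lambda>(j, t). X j t) i \<omega> \<in> {0..1}" if "i \<in> I" for i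
      using that support[OF j] by (auto simp: I_def elim!: eventually_mono)
    show "expectation ((\<lambda>(j, t). X j t) i) = \<mu> j (S k + 1)" if i: "i \<in> I" for i
    proof -
      obtain t where t: "i = (j, t)" "t \<in> {a + 1..a + L k}" using i unfolding I_def by auto
      then have "\<mu> j t = \<mu> j (S k + 1)"
        using exploration_block_subset_epoch[OF k j] stat j unfolding stationary_epoch_def a_def by blast
      then show ?thesis using mean[OF j] t(1) by simp
    qed
  qed (use gap_pos L_pos in \<open>auto simp: I_def\<close>)
  also have "\<dots> = 2 * exp (- real (L k) * \<Delta>\<^sup>2 / 2)"
    by (simp add: card_I power2_eq_square)
  finally show ?thesis .
qed

text \<open>Because \<open>\<gamma> \<ge> 2 / \<Delta>\<^sup>2\<close>, the Hoeffding bound is at most \<open>2 / (k powr \<rho> * l)\<close>,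
  which compensates the length \<open>\<approx> k powr \<rho> * l\<close> of the epoch.\<close>
lemma epoch_len_mult_prob_misestimate_le:
  assumes k: "1 \<le> k" and stat: "stationary_epoch k"
  shows "real (len k) * prob (\<Union>j<N. misestimate k j) \<le> 4 * N"
proof -
  define x where "x = real k powr \<rho> * l"
  have x_pos: "0 < x" using k l_pos by (simp add: x_def)
  have len_x: "real (len k) < x + 1" using epoch_len_less by (simp add: x_def)
  show ?thesis
  proof (cases "x \<le> 1")
    case True
    then have "real (len k) * prob (\<Union>j<N. misestimate k j) \<le> 1 * 1"
      using len_x by (intro mult_mono) auto
    then show ?thesis using N_pos by simp
  next
    case False
    then have ln_x: "0 < ln x" by simp
    have L_ge: "\<gamma> * ln x \<le> real (L k)"
      unfolding expl_len_def x_def[symmetric] by linarith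
    moreover have "0 < \<gamma> * ln x" using \<gamma>_pos ln_x by simp
    ultimately have L_pos: "1 \<le> L k" by simp
    have "ln x \<le> \<gamma> * ln x * \<Delta>\<^sup>2 / 2"
      using \<gamma>_ge ln_x gap_pos by (simp add: field_simps mult_right_mono)
    also have "\<dots> \<le> real (L k) * \<Delta>\<^sup>2 / 2"
      using L_ge by (intro divide_right_mono mult_right_mono) auto
    finally have ln_x_le: "ln x \<le> real (L k) * \<Delta>\<^sup>2 / 2" .
    have prob_j: "prob (misestimate k j) \<le> 2 / x" if j: "j < N" for j
    proof -
      have "prob (misestimate k j) \<le> 2 * exp (- real (L k) * \<Delta>\<^sup>2 / 2)"
        by (rule prob_misestimate_le[OF k stat j L_pos])
      also have "\<dots> \<le> 2 * exp (- ln x)" using ln_x_le by simp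
      also have "\<dots> = 2 / x" using x_pos by (simp add: exp_minus divide_inverse)
      finally show ?thesis .
    qed
    have "prob (\<Union>j<N. misestimate k j) \<le> (\<Sum>j<N. prob (misestimate k j))"
      by (rule finite_measure_subadditive_finite) (auto intro: misestimate_event)
    also have "\<dots> \<le> real N * (2 / x)"
      using sum_mono[of "{..<N}", OF prob_j] by simp
    finally have "real (len k) * prob (\<Union>j<N. misestimate k j) \<le> (2 * x) * (real N * (2 / x))"
      using len_x False by (intro mult_mono) auto
    also have "\<dots> = 4 * N" using x_pos by (simp add: field_simps)
    finally show ?thesis .
  qed
qed

text \<open>Estimates within \<open>\<Delta> / 2\<close> of the means cannot reverse a gap of \<open>\<Delta>\<close>.\<close>
lemma inst_regret_eq_0:
  assumes t: "1 \<le> t" and k: "k = epoch_of \<rho> l t" and exploit: "N * L k < t - S k"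
    and stat: "stationary_epoch k" and \<omega>: "\<omega> \<in> space M" "\<omega> \<notin> (\<Union>j<N. misestimate k j)"
  shows "inst_regret t \<omega> = 0"
proof -
  define v where "v j = expl_mean k j \<omega>" for j
  have arm: "arm \<omega> t = sel v"
    using exploit unfolding lmdsee_arm_def Let_def k expl_mean_def v_def by simp
  have "t \<in> {S k + 1..S (Suc k)}"
    using epoch_of_bounds[OF t] k by auto
  then have mean_t: "\<mu> j t = \<mu> j (S k + 1)" if "j < N" for j
    using stat that unfolding stationary_epoch_def by blast
  have close: "\<bar>v j - \<mu> j t\<bar> < \<Delta> / 2" if j: "j < N" for j
  proof -
    have "\<omega> \<notin> misestimate k j" using \<omega>(2) j by blast
    then show ?thesis using \<omega>(1) mean_t[OF j] unfolding misestimate_def v_def by auto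
  qed
  obtain i where i: "i < N" "\<And>j. j < N \<Longrightarrow> j \<noteq> i \<Longrightarrow> \<mu> j t + \<Delta> \<le> \<mu> i t"
    using gap[of t] by blast
  have "sel v = i"
  proof (rule ccontr)
    assume ne: "sel v \<noteq> i"
    have s: "sel v < N" "v i \<le> v (sel v)" using sel[of v] i(1) by auto
    show False using close[OF s(1)] close[OF i(1)] i(2)[OF s(1) ne] s(2) by linarith
  qed
  moreover have "Max ((\<lambda>j. \<mu> j t) ` {..<N}) = \<mu> i t"
    by (rule Max_eqI) (use i gap_pos in \<open>auto, force\<close>)
  ultimately show ?thesis unfolding inst_regret_def arm by simp
qed

lemma expected_inst_regret_le:
  assumes t: "1 \<le> t" and k: "k = epoch_of \<rho> l t"
  shows "expectation (inst_regret t) \<le> (if t - S k \<le> N * L k then 1 else 0)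
           + (if stationary_epoch k then prob (\<Union>j<N. misestimate k j) else 1)"
proof (cases "t - S k \<le> N * L k \<or> \<not> stationary_epoch k")
  case True
  have "expectation (inst_regret t) \<le> 1" by (rule expected_inst_regret_le_1)
  also have "1 \<le> (if t - S k \<le> N * L k then 1 else 0)
           + (if stationary_epoch k then prob (\<Union>j<N. misestimate k j) else 1)"
    using True by auto
  finally show ?thesis .
next
  case False
  have "expectation (inst_regret t) \<le> prob (\<Union>j<N. misestimate k j)"
    by (rule integral_le_prob_of_zero_outside)
      (use inst_regret_bounds inst_regret_eq_0[OF t k] False misestimate_event in auto)
  then show ?thesis using False by simp
qed

lemma epoch_regret_le:
  assumes k: "1 \<le> k"
  shows "(\<Sum>t\<in>{S k + 1..S (Suc k)}. expectation (inst_regret t))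
           \<le> real (N * L k) + 4 * N + (if stationary_epoch k then 0 else real (len k))"
proof -
  define B where "B = {S k + 1..S (Suc k)}"
  define c where "c = (if stationary_epoch k then prob (\<Union>j<N. misestimate k j) else 1)"
  have card_B: "card B = len k" unfolding B_def epoch_start_Suc[OF k] by simp
  have "(\<Sum>t\<in>B. expectation (inst_regret t)) \<le> (\<Sum>t\<in>B. (if t - S k \<le> N * L k then 1 else 0) + c)"
  proof (rule sum_mono)
    fix t assume "t \<in> B"
    moreover from this have "epoch_of \<rho> l t = k"
      using k by (intro epoch_of_eqI) (auto simp: B_def)
    ultimately show "expectation (inst_regret t) \<le> (if t - S k \<le> N * L k then 1 else 0) + c"
      using expected_inst_regret_le[of t k] unfolding c_def B_def by simp
  qed
  also have "\<dots> = (\<Sum>t\<in>B. (if t - S k \<le> N * L k then 1 else 0)) + real (len k) * c"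
    by (simp add: sum.distrib card_B)
  also have "(\<Sum>t\<in>B. (if t - S k \<le> N * L k then 1 else 0) :: real) = real (card {t\<in>B. t - S k \<le> N * L k})"
    by (simp add: sum.inter_filter[symmetric] B_def)
  also have "card {t\<in>B. t - S k \<le> N * L k} \<le> card {S k + 1..S k + N * L k}"
    by (rule card_mono) (auto simp: B_def)
  also have "card {S k + 1..S k + N * L k} = N * L k" by simp
  also have "real (len k) * c \<le> 4 * N + (if stationary_epoch k then 0 else real (len k))"
    using epoch_len_mult_prob_misestimate_le[OF k] N_pos unfolding c_def by auto
  finally show ?thesis unfolding B_def by simp
qed

lemma breakpoint_in_nonstationary_epoch:
  assumes k: "1 \<le> k" and nonstat: "\<not> stationary_epoch k"
  shows "\<exists>t\<in>{S k + 2..S (Suc k)}. \<exists>j<N. \<mu> j t \<noteq> \<mu> j (t - 1)"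
proof (rule ccontr)
  assume "\<not> ?thesis"
  then have no_change: "\<mu> j t = \<mu> j (t - 1)" if "t \<in> {S k + 2..S (Suc k)}" "j < N" for t j
    using that by blast
  have "\<forall>t\<in>{S k + 1..S (Suc k)}. \<forall>j<N. \<mu> j t = \<mu> j (S k + 1)"
  proof (intro ballI allI impI)
    fix t j assume "t \<in> {S k + 1..S (Suc k)}" "j < N"
    then have "S k + 1 \<le> t" "t \<le> S (Suc k)" by auto
    then show "\<mu> j t = \<mu> j (S k + 1)"
    proof (induction t rule: dec_induct)
      case (step n)
      then show ?case using no_change[of "Suc n" j] \<open>j < N\<close> by simp
    qed simp
  qed
  then show False using nonstat unfolding stationary_epoch_def by blast
qed

lemma card_nonstationary_epochs_le:
  "card {k\<in>{1..K}. \<not> stationary_epoch k} \<le> breakpoints N \<mu> (S (Suc K))"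
proof -
  define A where "A = {k\<in>{1..K}. \<not> stationary_epoch k}"
  define Bs where "Bs = {t\<in>{2..S (Suc K)}. \<exists>j<N. \<mu> j t \<noteq> \<mu> j (t - 1)}"
  define w where "w k = (SOME t. t \<in> {S k + 2..S (Suc k)} \<and> (\<exists>j<N. \<mu> j t \<noteq> \<mu> j (t - 1)))" for k
  have w: "w k \<in> {S k + 2..S (Suc k)}" "\<exists>j<N. \<mu> j (w k) \<noteq> \<mu> j (w k - 1)" if "k \<in> A" for k
    using someI_ex[OF breakpoint_in_nonstationary_epoch[unfolded Bex_def]] that
    unfolding w_def A_def by auto
  have "inj_on w A"
  proof (rule inj_onI)
    fix k k' assume "k \<in> A" "k' \<in> A" "w k = w k'"
    moreover have "epoch_of \<rho> l (w q) = q" if "q \<in> A" for q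
      using w[OF that] that by (intro epoch_of_eqI) (auto simp: A_def)
    ultimately show "k = k'" by metis
  qed
  moreover have "w ` A \<subseteq> Bs"
  proof
    fix t assume "t \<in> w ` A"
    then obtain k where k: "k \<in> A" "t = w k" by auto
    then have "S (Suc k) \<le> S (Suc K)" by (intro epoch_start_mono) (auto simp: A_def)
    then show "t \<in> Bs" using w[OF k(1)] unfolding k(2) Bs_def by auto
  qed
  ultimately have "card A \<le> card Bs" by (intro card_inj_on_le) (auto simp: Bs_def)
  then show ?thesis unfolding A_def Bs_def breakpoints_def .
qed

lemma regret_le_epoch_sum:
  assumes T: "1 \<le> T" and K: "K = epoch_of \<rho> l T"
  shows "lmdsee_regret M X \<mu> N sel \<gamma> \<rho> l T
           \<le> (\<Sum>k\<in>{1..K}. real (N * L k) + 4 * N) + real (breakpoints N \<mu> (S (Suc K))) * real (len K)"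
proof -
  have nonstationary_sum: "(\<Sum>k\<in>{1..K}. if stationary_epoch k then 0 else real (len K))
                             = real (card {k\<in>{1..K}. \<not> stationary_epoch k}) * real (len K)"
  proof -
    have "(\<Sum>k\<in>{1..K}. if stationary_epoch k then 0 else real (len K))
            = (\<Sum>k\<in>{1..K}. if \<not> stationary_epoch k then real (len K) else 0)"
      by (intro sum.cong) auto
    then show ?thesis by (simp flip: sum.inter_filter)
  qed
  have "lmdsee_regret M X \<mu> N sel \<gamma> \<rho> l T
          \<le> (\<Sum>k\<in>{1..K}. \<Sum>t\<in>{S k + 1..S (Suc k)}. expectation (inst_regret t))"
    unfolding regret_eq_sum K by (intro sum_le_sum_over_epochs T expected_inst_regret_nonneg)
  also have "\<dots> \<le> (\<Sum>k\<in>{1..K}. real (N * L k) + 4 * N + (if stationary_epoch k then 0 else real (len K)))"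
  proof (rule sum_mono)
    fix k assume "k \<in> {1..K}"
    then show "(\<Sum>t\<in>{S k + 1..S (Suc k)}. expectation (inst_regret t))
                 \<le> real (N * L k) + 4 * N + (if stationary_epoch k then 0 else real (len K))"
      using epoch_regret_le[of k] epoch_len_mono[OF \<rho>_nonneg, of k K] by auto
  qed
  also have "\<dots> = (\<Sum>k\<in>{1..K}. real (N * L k) + 4 * N)
                  + real (card {k\<in>{1..K}. \<not> stationary_epoch k}) * real (len K)"
    by (simp only: sum.distrib nonstationary_sum)
  also have "\<dots> \<le> (\<Sum>k\<in>{1..K}. real (N * L k) + 4 * N) + real (breakpoints N \<mu> (S (Suc K))) * real (len K)"
    using card_nonstationary_epochs_le[of K] by (intro add_left_mono mult_right_mono) auto
  finally show ?thesis .
qed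

end

section \<open>Abruptly changing environments\<close>

locale lmdsee_abrupt = lmdsee +
  fixes C \<nu> :: real
  assumes C_pos: "0 < C" and \<nu>_nonneg: "0 \<le> \<nu>" and \<nu>_less_1: "\<nu> < 1"
    and breaks: "\<And>T. real (breakpoints N \<mu> T) \<le> C * real T powr \<nu>"
    and \<rho>_eq: "\<rho> = (1 - \<nu>) / (1 + \<nu>)"
begin

lemma \<rho>_le_1: "\<rho> \<le> 1"
  using \<nu>_nonneg by (simp add: \<rho>_eq)

text \<open>This choice of \<open>\<rho>\<close> makes the number \<open>\<approx> T powr (1 / (1 + \<rho>))\<close> of epochs up to
  time \<open>T\<close> equal to \<open>T powr ((1 + \<nu>) / 2)\<close>, and the epoch length times the number
  \<open>T powr \<nu>\<close> of breakpoints as well.\<close>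
lemma exponent_identities:
  "1 / (1 + \<rho>) = (1 + \<nu>) / 2" "(1 + \<nu>) / 2 * \<rho> = (1 - \<nu>) / 2"
  using \<nu>_nonneg by (simp_all add: \<rho>_eq field_simps)

lemma epoch_count_le: "\<exists>c>0. \<forall>T\<ge>1. real (epoch_of \<rho> l T) \<le> c * real T powr ((1 + \<nu>) / 2)"
proof (intro exI conjI allI impI)
  define c where "c = (2 / l) powr ((1 + \<nu>) / 2) + 1"
  show "0 < c" unfolding c_def by (simp add: add_nonneg_pos)
  fix T :: nat assume T: "1 \<le> T"
  have "real (epoch_of \<rho> l T) \<le> (2 / l * real T) powr (1 / (1 + \<rho>)) + 1"
    by (rule epoch_of_le_powr[OF \<rho>_nonneg \<rho>_le_1 T])
  also have "\<dots> = (2 / l) powr ((1 + \<nu>) / 2) * real T powr ((1 + \<nu>) / 2) + 1"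
    unfolding exponent_identities using l_pos by (subst powr_mult) auto
  also have "\<dots> \<le> c * real T powr ((1 + \<nu>) / 2)"
    using T \<nu>_nonneg by (simp add: c_def algebra_simps ge_one_powr_ge_zero)
  finally show "real (epoch_of \<rho> l T) \<le> c * real T powr ((1 + \<nu>) / 2)" .
qed

lemma last_epoch_len_le: "\<exists>c\<ge>0. \<forall>T\<ge>1. real (len (epoch_of \<rho> l T)) \<le> c * real T powr ((1 - \<nu>) / 2)"
proof -
  obtain c where c: "0 < c" "\<And>T. 1 \<le> T \<Longrightarrow> real (epoch_of \<rho> l T) \<le> c * real T powr ((1 + \<nu>) / 2)"
    using epoch_count_le by blast
  show ?thesis
  proof (intro exI conjI allI impI)
    show "0 \<le> c powr \<rho> * l + 1" using l_pos by simp
    fix T :: nat assume T: "1 \<le> T"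
    have scale: "(c * real T powr ((1 + \<nu>) / 2)) powr \<rho> = c powr \<rho> * real T powr ((1 - \<nu>) / 2)"
    proof -
      have "(real T powr ((1 + \<nu>) / 2)) powr \<rho> = real T powr ((1 - \<nu>) / 2)"
        by (simp only: powr_powr exponent_identities(2))
      then show ?thesis using c(1) by (simp add: powr_mult)
    qed
    have "real (len (epoch_of \<rho> l T)) < real (epoch_of \<rho> l T) powr \<rho> * l + 1"
      by (rule epoch_len_less)
    also have "\<dots> \<le> (c * real T powr ((1 + \<nu>) / 2)) powr \<rho> * l + 1"
      using c(2)[OF T] \<rho>_nonneg l_pos by (intro add_right_mono mult_right_mono powr_mono2) auto
    also have "\<dots> = c powr \<rho> * l * real T powr ((1 - \<nu>) / 2) + 1"
      by (simp add: scale)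
    also have "\<dots> \<le> (c powr \<rho> * l + 1) * real T powr ((1 - \<nu>) / 2)"
      using T \<nu>_less_1 by (simp add: algebra_simps ge_one_powr_ge_zero)
    finally show "real (len (epoch_of \<rho> l T)) \<le> (c powr \<rho> * l + 1) * real T powr ((1 - \<nu>) / 2)"
      by (simp add: algebra_simps)
  qed
qed

lemma breakpoints_before_epoch_end_le:
  "\<exists>c\<ge>0. \<forall>T\<ge>1. real (breakpoints N \<mu> (S (Suc (epoch_of \<rho> l T)))) \<le> c * real T powr \<nu>"
proof -
  obtain c where c: "0 \<le> c" "\<And>T. 1 \<le> T \<Longrightarrow> real (len (epoch_of \<rho> l T)) \<le> c * real T powr ((1 - \<nu>) / 2)"
    using last_epoch_len_le by blast
  show ?thesis
  proof (intro exI conjI allI impI)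
    show "0 \<le> C * (1 + c) powr \<nu>" using C_pos by simp
    fix T :: nat assume T: "1 \<le> T"
    define K where "K = epoch_of \<rho> l T"
    have "real (len K) \<le> c * real T powr ((1 - \<nu>) / 2)"
      using c(2)[OF T] unfolding K_def .
    also have "\<dots> \<le> c * real T"
      using T \<nu>_nonneg \<nu>_less_1 powr_mono[of "(1 - \<nu>) / 2" 1 "real T"] c(1)
      by (intro mult_left_mono) auto
    finally have "real (len K) \<le> c * real T" .
    moreover have "real (S (Suc K)) = real (S K) + real (len K)" "S K < T"
      using epoch_start_Suc epoch_of_bounds[OF T] unfolding K_def by auto
    ultimately have "real (S (Suc K)) \<le> (1 + c) * real T"
      by (simp add: algebra_simps)
    then have "C * real (S (Suc K)) powr \<nu> \<le> C * ((1 + c) * real T) powr \<nu>"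
      using C_pos \<nu>_nonneg by (intro mult_left_mono powr_mono2) auto
    then have "real (breakpoints N \<mu> (S (Suc K))) \<le> C * ((1 + c) * real T) powr \<nu>"
      using breaks[of "S (Suc K)"] by linarith
    then show "real (breakpoints N \<mu> (S (Suc K))) \<le> C * (1 + c) powr \<nu> * real T powr \<nu>"
      using c(1) by (simp add: powr_mult mult.assoc)
  qed
qed

lemma sum_epoch_costs_le:
  "\<exists>c. \<forall>T\<ge>3. (\<Sum>k\<in>{1..epoch_of \<rho> l T}. real (N * L k) + 4 * N)
                \<le> c * (real T powr ((1 + \<nu>) / 2) * ln (real T))"
proof -
  obtain c where c: "\<And>T. 1 \<le> T \<Longrightarrow> real (epoch_of \<rho> l T) \<le> c * real T powr ((1 + \<nu>) / 2)"
    using epoch_count_le by blast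
  define cL where "cL = \<gamma> * (1 + \<bar>ln l\<bar>) + 1"
  show ?thesis
  proof (intro exI allI impI)
    fix T :: nat assume T: "3 \<le> T"
    define K where "K = epoch_of \<rho> l T"
    have T1: "1 \<le> T" using T by simp
    have ln_T: "1 \<le> ln (real T)" using T exp_le by (subst ln_ge_iff) auto
    have "(\<Sum>k\<in>{1..K}. real (N * L k) + 4 * N) \<le> (\<Sum>k\<in>{1..K}. real N * (cL + 4) * ln (real T))"
    proof (rule sum_mono)
      fix k assume k: "k \<in> {1..K}"
      then have L_le: "real (L k) \<le> cL * ln (real T)"
        using expl_len_le_ln[of \<gamma> \<rho> l k T] \<gamma>_pos \<rho>_nonneg \<rho>_le_1 l_pos epoch_of_le[OF T1] T
        unfolding cL_def K_def by auto
      then show "real (N * L k) + 4 * N \<le> real N * (cL + 4) * ln (real T)"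
        using mult_left_mono[OF L_le, of "real N"] mult_left_mono[OF ln_T, of "4 * real N"]
        by (simp add: algebra_simps)
    qed
    also have "\<dots> \<le> c * real T powr ((1 + \<nu>) / 2) * (real N * (cL + 4) * ln (real T))"
      using c[OF T1] ln_T \<gamma>_pos unfolding K_def cL_def by (simp add: mult_right_mono)
    finally show "(\<Sum>k\<in>{1..K}. real (N * L k) + 4 * N)
                    \<le> c * real N * (cL + 4) * (real T powr ((1 + \<nu>) / 2) * ln (real T))"
      by (simp add: algebra_simps)
  qed
qed

lemma breakpoint_cost_le:
  "\<exists>c\<ge>0. \<forall>T\<ge>1. real (breakpoints N \<mu> (S (Suc (epoch_of \<rho> l T)))) * real (len (epoch_of \<rho> l T))
                \<le> c * real T powr ((1 + \<nu>) / 2)"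
proof -
  obtain c1 where c1: "0 \<le> c1"
    "\<And>T. 1 \<le> T \<Longrightarrow> real (len (epoch_of \<rho> l T)) \<le> c1 * real T powr ((1 - \<nu>) / 2)"
    using last_epoch_len_le by blast
  obtain c2 where c2: "0 \<le> c2"
    "\<And>T. 1 \<le> T \<Longrightarrow> real (breakpoints N \<mu> (S (Suc (epoch_of \<rho> l T)))) \<le> c2 * real T powr \<nu>"
    using breakpoints_before_epoch_end_le by blast
  show ?thesis
  proof (intro exI conjI allI impI)
    show "0 \<le> c2 * c1" using c1 c2 by simp
    fix T :: nat assume T: "1 \<le> T"
    have "real (breakpoints N \<mu> (S (Suc (epoch_of \<rho> l T)))) * real (len (epoch_of \<rho> l T))
            \<le> (c2 * real T powr \<nu>) * (c1 * real T powr ((1 - \<nu>) / 2))"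
      using c1 c2 T by (intro mult_mono) auto
    also have "\<dots> = c2 * c1 * (real T powr \<nu> * real T powr ((1 - \<nu>) / 2))"
      by (simp add: ac_simps)
    also have "real T powr \<nu> * real T powr ((1 - \<nu>) / 2) = real T powr ((1 + \<nu>) / 2)"
    proof -
      have "\<nu> + (1 - \<nu>) / 2 = (1 + \<nu>) / 2" by (simp add: field_simps)
      then show ?thesis by (simp only: powr_add[symmetric])
    qed
    finally show "real (breakpoints N \<mu> (S (Suc (epoch_of \<rho> l T)))) * real (len (epoch_of \<rho> l T))
                    \<le> c2 * c1 * real T powr ((1 + \<nu>) / 2)" .
  qed
qed

lemma regret_le_powr_ln:
  "\<exists>D. \<forall>T\<ge>3. lmdsee_regret M X \<mu> N sel \<gamma> \<rho> l T \<le> D * (real T powr ((1 + \<nu>) / 2) * ln (real T))"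
proof -
  obtain c1 where c1: "\<And>T. 3 \<le> T \<Longrightarrow> (\<Sum>k\<in>{1..epoch_of \<rho> l T}. real (N * L k) + 4 * N)
                        \<le> c1 * (real T powr ((1 + \<nu>) / 2) * ln (real T))"
    using sum_epoch_costs_le by blast
  obtain c2 where c2: "0 \<le> c2" "\<And>T. 1 \<le> T \<Longrightarrow>
      real (breakpoints N \<mu> (S (Suc (epoch_of \<rho> l T)))) * real (len (epoch_of \<rho> l T))
        \<le> c2 * real T powr ((1 + \<nu>) / 2)"
    using breakpoint_cost_le by blast
  show ?thesis
  proof (intro exI allI impI)
    fix T :: nat assume T: "3 \<le> T"
    have "1 \<le> ln (real T)" using T exp_le by (subst ln_ge_iff) auto
    then have "c2 * real T powr ((1 + \<nu>) / 2) \<le> c2 * (real T powr ((1 + \<nu>) / 2) * ln (real T))"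
      using c2(1) by (intro mult_left_mono) (auto simp: mult_le_cancel_left1)
    then show "lmdsee_regret M X \<mu> N sel \<gamma> \<rho> l T \<le> (c1 + c2) * (real T powr ((1 + \<nu>) / 2) * ln (real T))"
      using regret_le_epoch_sum[of T "epoch_of \<rho> l T"] c1[OF T] c2(2)[of T] T
      by (simp add: algebra_simps)
  qed
qed

lemma regret_bigo: "(\<lambda>T. lmdsee_regret M X \<mu> N sel \<gamma> \<rho> l T) \<in> O(\<lambda>T. real T powr ((1 + \<nu>) / 2) * ln (real T))"
proof -
  obtain D where D: "\<And>T. 3 \<le> T \<Longrightarrow> lmdsee_regret M X \<mu> N sel \<gamma> \<rho> l T \<le> D * (real T powr ((1 + \<nu>) / 2) * ln (real T))"
    using regret_le_powr_ln by blast
  have "\<forall>\<^sub>F T in at_top. norm (lmdsee_regret M X \<mu> N sel \<gamma> \<rho> l T) \<le> D * norm (real T powr ((1 + \<nu>) / 2) * ln (real T))"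
    unfolding eventually_at_top_linorder
    using D regret_nonneg by (intro exI[of _ 3]) auto
  then show ?thesis by (rule bigoI)
qed

end

theorem theorem1:
  fixes M :: "'a measure" and X :: "nat \<Rightarrow> nat \<Rightarrow> 'a \<Rightarrow> real"
    and \<mu> :: "nat \<Rightarrow> nat \<Rightarrow> real" and N :: nat and sel :: "(nat \<Rightarrow> real) \<Rightarrow> nat"
    and C \<nu> \<Delta> \<gamma> l :: real
  assumes "prob_space M"
    and "N \<ge> 1"
    and indep: "prob_space.indep_vars M (\<lambda>_. borel) (\<lambda>(j, t). X j t) ({..<N} \<times> UNIV)"
    and support: "\<And>j t. j < N \<Longrightarrow> AE \<omega> in M. 0 \<le> X j t \<omega> \<and> X j t \<omega> \<le> 1"
    and mean: "\<And>j t. j < N \<Longrightarrow> integral\<^sup>L M (X j t) = \<mu> j t"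
    and "C > 0" and "0 \<le> \<nu>" and "\<nu> < 1"
    and breaks: "\<And>T. real (breakpoints N \<mu> T) \<le> C * real T powr \<nu>"
    and "\<Delta> > 0"
    and gap: "\<And>t. \<exists>i<N. \<forall>j<N. j \<noteq> i \<longrightarrow> \<mu> j t + \<Delta> \<le> \<mu> i t"
    and "\<gamma> \<ge> 2 / \<Delta>\<^sup>2"
    and "l > 0"
    and len_ok: "\<And>k::nat. k \<ge> 1 \<Longrightarrow>
       \<lceil>real k powr ((1 - \<nu>) / (1 + \<nu>)) * l\<rceil>
         - int N * \<lceil>\<gamma> * ln (real k powr ((1 - \<nu>) / (1 + \<nu>)) * l)\<rceil> \<ge> 0"
    and sel: "\<And>v. sel v < N \<and> (\<forall>j<N. v j \<le> v (sel v))"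
  shows "(\<lambda>T. lmdsee_regret M X \<mu> N sel \<gamma> ((1 - \<nu>) / (1 + \<nu>)) l T)
           \<in> O(\<lambda>T. real T powr ((1 + \<nu>) / 2) * ln (real T))"
proof -
  interpret lmdsee_abrupt M "(1 - \<nu>) / (1 + \<nu>)" l X \<mu> N sel \<Delta> \<gamma> C \<nu>
  proof (intro lmdsee_abrupt.intro lmdsee.intro epoch_schedule.intro lmdsee_axioms.intro
      lmdsee_abrupt_axioms.intro)
    show "0 \<le> (1 - \<nu>) / (1 + \<nu>)" using \<open>0 \<le> \<nu>\<close> \<open>\<nu> < 1\<close> by simp
  qed (rule refl | fact assms)+
  show ?thesis by (rule regret_bigo)
qed

end
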